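(* Let $m,n,w,d$ be positive integers with $1\le w\le m-1$, let $l$ be a positive integer dividing $n$ and $v$ an integer with $0\le v\le l$. Then $$A(m,n,w,d)\le\left(\frac{m}{w}\right)^{\frac{nv}{l}}\left(\frac{m}{m-w}\right)^{n-\frac{nv}{l}} A\left((m-1)l,\frac{n}{l},lw-v,d\right),$$ and $$A(m,n,w,d)\le\left(\frac{m^l}{\binom{l}{v}w^v(m-w)^{l-v}}\right)^{\frac{n}{l}} A\left((m-1)l,\frac{n}{l},lw-v,d-\frac{n}{l}\min\{v,l-v\}\right).$$
   Context: $J(m,w)$ denotes the set of binary vectors of length $m$ and Hamming weight $w$. Elements of $J(m,w)^n$ are identified with $m\times n$ binary matrices all of whose columns have weight $w$, with distance the binary Hamming distance. $A(m,n,w,d)$ denotes the maximum cardinality of a nonempty subset of $J(m,w)^n$ in which any two distinct elements are at Hamming distance at least $2d$ (for $d\le 0$ this equals $\binom{m}{w}^n$). *)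

theory Defs
  imports Complex_Main
begin

text \<open>Elements of J(m,w)^n, represented as m x n binary matrices
  (functions row -> column -> bool, False outside the m x n range),
  every column having exactly w ones.\<close>
definition cw_space :: "nat \<Rightarrow> nat \<Rightarrow> nat \<Rightarrow> (nat \<Rightarrow> nat \<Rightarrow> bool) set" where
  "cw_space m n w = {M. (\<forall>i j. M i j \<longrightarrow> i < m \<and> j < n) \<and>
                        (\<forall>j<n. card {i. i < m \<and> M i j} = w)}"

definition hdist :: "nat \<Rightarrow> nat \<Rightarrow> (nat \<Rightarrow> nat \<Rightarrow> bool) \<Rightarrow> (nat \<Rightarrow> nat \<Rightarrow> bool) \<Rightarrow> nat" where
  "hdist m n M N = card {(i, j). i < m \<and> j < n \<and> M i j \<noteq> N i j}"

definition A :: "nat \<Rightarrow> nat \<Rightarrow> nat \<Rightarrow> int \<Rightarrow> nat" where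
  "A m n w d = Max {card C | C. C \<subseteq> cw_space m n w \<and> C \<noteq> {} \<and>
      (\<forall>x\<in>C. \<forall>y\<in>C. x \<noteq> y \<longrightarrow> int (hdist m n x y) \<ge> 2 * d)}"

end

theory Submission
  imports Defs "HOL-Library.FuncSet"
begin

text \<open>Fix an optimal code \<open>C\<close>, choose one row \<open>r j\<close> in every column \<open>j\<close>, and for every block
  of \<open>l\<close> consecutive columns a \<open>v\<close>-subset of the block. The codewords having a one at
  \<open>(r j, j)\<close> exactly in the chosen columns form a subcode; deleting the entries \<open>(r j, j)\<close>
  and stacking each block into a single column of height \<open>(m - 1) l\<close> maps it injectively
  into \<open>J((m-1)l, lw-v)^(n/l)\<close>, losing no distance. Every codeword lies in exactly
  \<open>(w^v (m-w)^(l-v))^(n/l)\<close> of these subcodes, so averaging over the \<open>m^n\<close> row choices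
  gives the first bound. For the second, the subcodes for all \<open>binom l v ^ (n/l)\<close> block
  patterns are punctured simultaneously; two patterns differ in at most \<open>2 min(v, l-v)\<close>
  positions per block, which is the loss of distance.\<close>

lemma (in comm_monoid_set) lessThan_mult_blocks:
  fixes g :: "nat \<Rightarrow> 'a"
  shows "F g {..<b * a} = F (\<lambda>t. F (\<lambda>s. g (t * a + s)) {..<a}) {..<b}"
proof -
  have "F g {..<b * a} = F (\<lambda>t. F g {t * a..<t * a + a}) {..<b}"
    using nat_group[of g a b] by simp
  also have "\<dots> = F (\<lambda>t. F (\<lambda>s. g (t * a + s)) {..<a}) {..<b}"
    by (rule cong[OF refl]) (simp add: atLeastLessThan_shift_0 atLeast0LessThan add.commute)
  finally show ?thesis .
qed

lemma card_lessThan_eq_sum_of_bool: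
  fixes a :: nat
  shows "card {i. i < a \<and> P i} = (\<Sum>i<a. of_bool (P i))"
proof -
  have "(\<Sum>i<a. of_bool (P i)) = card ({..<a} \<inter> {i. P i})" by simp
  also have "{..<a} \<inter> {i. P i} = {i. i < a \<and> P i}" by auto
  finally show ?thesis by simp
qed

lemma card_filter_eq_sum_of_bool:
  "finite X \<Longrightarrow> card {x \<in> X. P x} = (\<Sum>x\<in>X. of_bool (P x))"
  by (simp add: Int_def conj_commute)

lemma mult_add_less_mult:
  fixes g k t l :: nat
  assumes "g < k" "t < l"
  shows "g * l + t < k * l"
proof -
  have "g * l + t < Suc g * l" using assms(2) by simp
  also have "\<dots> \<le> k * l" using assms(1) by (intro mult_le_mono1) simp
  finally show ?thesis .
qed

lemma card_sym_diff_le: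
  assumes "X \<subseteq> {..<l}" "Y \<subseteq> {..<l}" "card X = v" "card Y = v"
  shows "card {t. t < l \<and> (t \<in> X) \<noteq> (t \<in> Y)} \<le> 2 * min v (l - v)"
proof -
  have fin: "finite X" "finite Y" using assms(1,2) finite_subset by auto
  have eq: "{t. t < l \<and> (t \<in> X) \<noteq> (t \<in> Y)} = (X - Y) \<union> (Y - X)" using assms(1,2) by auto
  have split: "card {t. t < l \<and> (t \<in> X) \<noteq> (t \<in> Y)} = card (X - Y) + card (Y - X)"
    unfolding eq using fin by (subst card_Un_disjoint) auto
  have sym: "card (Y - X) = card (X - Y)"
    using fin assms(3,4) by (simp add: card_Diff_subset_Int Int_commute)
  have "card (X - Y) \<le> card ({..<l} - Y)" using assms(1) by (intro card_mono) auto
  also have "\<dots> = l - v" using assms(2,4) fin by (subst card_Diff_subset) auto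
  finally have "card (X - Y) \<le> l - v" .
  moreover have "card (X - Y) \<le> v" using assms(3) fin by (metis card_mono Diff_subset)
  ultimately show ?thesis using split sym by simp
qed

lemma prod_block_pattern:
  fixes x y :: "'a :: comm_monoid_mult"
  assumes "\<forall>g<k. S g \<subseteq> {..<l} \<and> card (S g) = v"
  shows "(\<Prod>j<k * l. if j mod l \<in> S (j div l) then x else y) = (x ^ v * y ^ (l - v)) ^ k"
proof -
  have block: "(\<Prod>t<l. if t \<in> S g then x else y) = x ^ v * y ^ (l - v)" if "g < k" for g
  proof -
    have S: "S g \<subseteq> {..<l}" "card (S g) = v" using assms that by auto
    then have "card ({..<l} - S g) = l - v" by (simp add: card_Diff_subset finite_subset)
    moreover have "(\<Prod>t<l. if t \<in> S g then x else y) = (\<Prod>t\<in>S g. x) * (\<Prod>t\<in>{..<l} - S g. y)"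
      using S(1) by (simp add: prod.If_cases Int_absorb1 Diff_eq)
    ultimately show ?thesis using S(2) by simp
  qed
  have "(\<Prod>j<k * l. if j mod l \<in> S (j div l) then x else y) =
      (\<Prod>g<k. \<Prod>t<l. if (g * l + t) mod l \<in> S ((g * l + t) div l) then x else y)"
    by (rule prod.lessThan_mult_blocks)
  also have "\<dots> = (\<Prod>g<k. x ^ v * y ^ (l - v))"
    using block by (intro prod.cong refl) simp
  finally show ?thesis by simp
qed

definition skip :: "nat \<Rightarrow> nat \<Rightarrow> nat" where
  "skip r s = (if s < r then s else Suc s)"

lemma bij_betw_skip:
  assumes "r < m"
  shows "bij_betw (skip r) {..<m - 1} ({..<m} - {r})"
  unfolding bij_betw_def
proof
  show "inj_on (skip r) {..<m - 1}" by (auto simp: inj_on_def skip_def split: if_splits)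
  show "skip r ` {..<m - 1} = {..<m} - {r}"
  proof
    show "skip r ` {..<m - 1} \<subseteq> {..<m} - {r}" using assms by (auto simp: skip_def)
    show "{..<m} - {r} \<subseteq> skip r ` {..<m - 1}"
    proof
      fix i assume "i \<in> {..<m} - {r}"
      then show "i \<in> skip r ` {..<m - 1}"
        using assms by (intro image_eqI[where x = "if i < r then i else i - 1"]) (auto simp: skip_def)
    qed
  qed
qed

lemma card_skip:
  assumes "r < m"
  shows "card {i. i < m \<and> P i} = card {s. s < m - 1 \<and> P (skip r s)} + of_bool (P r)"
proof -
  have bij: "bij_betw (skip r) {..<m - 1} ({..<m} - {r})" using bij_betw_skip[OF assms] .
  have "{i. i < m \<and> P i} - {r} = {i \<in> {..<m} - {r}. P i}" by auto
  also have "\<dots> = {i \<in> skip r ` {..<m - 1}. P i}" using bij_betw_imp_surj_on[OF bij] by simp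
  also have "\<dots> = skip r ` {s. s < m - 1 \<and> P (skip r s)}" by auto
  finally have "skip r ` {s. s < m - 1 \<and> P (skip r s)} = {i. i < m \<and> P i} - {r}" ..
  moreover have "inj_on (skip r) {s. s < m - 1 \<and> P (skip r s)}"
    using bij_betw_imp_inj_on[OF bij] by (rule inj_on_subset) auto
  ultimately have "card {s. s < m - 1 \<and> P (skip r s)} = card ({i. i < m \<and> P i} - {r})"
    using card_image by fastforce
  moreover have "card {i. i < m \<and> P i} = card ({i. i < m \<and> P i} - {r}) + of_bool (P r)"
  proof (cases "P r")
    case True
    then show ?thesis using assms card.remove[of "{i. i < m \<and> P i}" r] by simp
  qed simp
  ultimately show ?thesis by simp
qed

text \<open>\<open>puncture m l k r M\<close> deletes the entry \<open>(r j, j)\<close> of every column \<open>j\<close> of the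
  \<open>m \<times> k l\<close> matrix \<open>M\<close> and stacks the columns \<open>g l, \<dots>, g l + l - 1\<close> into the column \<open>g\<close>
  of an \<open>(m - 1) l \<times> k\<close> matrix; row \<open>t (m - 1) + s\<close> of column \<open>g\<close> is the \<open>s\<close>-th surviving
  entry of column \<open>g l + t\<close>.\<close>
definition puncture ::
    "nat \<Rightarrow> nat \<Rightarrow> nat \<Rightarrow> (nat \<Rightarrow> nat) \<Rightarrow> (nat \<Rightarrow> nat \<Rightarrow> bool) \<Rightarrow> nat \<Rightarrow> nat \<Rightarrow> bool" where
  "puncture m l k r M = (\<lambda>i g. i < (m - 1) * l \<and> g < k \<and>
      M (skip (r (g * l + i div (m - 1))) (i mod (m - 1))) (g * l + i div (m - 1)))"

lemma puncture_apply:
  assumes "s < m - 1" "t < l" "g < k"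
  shows "puncture m l k r M (t * (m - 1) + s) g = M (skip (r (g * l + t)) s) (g * l + t)"
proof -
  have "t * (m - 1) + s < (m - 1) * l"
    using mult_add_less_mult[OF assms(2,1)] by (simp add: mult.commute)
  then show ?thesis using assms unfolding puncture_def by simp
qed

lemma card_puncture_column:
  assumes "g < k"
  shows "card {i. i < (m - 1) * l \<and> P (puncture m l k r M i g) (puncture m l k r N i g)} =
    (\<Sum>t<l. card {s. s < m - 1 \<and>
       P (M (skip (r (g * l + t)) s) (g * l + t)) (N (skip (r (g * l + t)) s) (g * l + t))})"
proof -
  have "card {i. i < (m - 1) * l \<and> P (puncture m l k r M i g) (puncture m l k r N i g)} =
      (\<Sum>i<l * (m - 1). of_bool (P (puncture m l k r M i g) (puncture m l k r N i g)))"
    by (simp add: card_lessThan_eq_sum_of_bool mult.commute)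
  also have "\<dots> = (\<Sum>t<l. \<Sum>s<m - 1. of_bool (P (puncture m l k r M (t * (m - 1) + s) g)
                                             (puncture m l k r N (t * (m - 1) + s) g)))"
    by (rule sum.lessThan_mult_blocks)
  also have "\<dots> = (\<Sum>t<l. \<Sum>s<m - 1.
      of_bool (P (M (skip (r (g * l + t)) s) (g * l + t)) (N (skip (r (g * l + t)) s) (g * l + t))))"
    using assms by (intro sum.cong refl) (simp only: lessThan_iff puncture_apply)
  finally show ?thesis by (simp add: card_lessThan_eq_sum_of_bool)
qed

lemma hdist_eq_sum_columns:
  "hdist m n M N = (\<Sum>j<n. card {i. i < m \<and> M i j \<noteq> N i j})"
proof -
  have "{(i, j). i < m \<and> j < n \<and> M i j \<noteq> N i j} = (\<Union>j<n. (\<lambda>i. (i, j)) ` {i. i < m \<and> M i j \<noteq> N i j})"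
    by auto
  moreover have "card (\<Union>j<n. (\<lambda>i. (i, j)) ` {i. i < m \<and> M i j \<noteq> N i j}) =
      (\<Sum>j<n. card ((\<lambda>i. (i, j)) ` {i. i < m \<and> M i j \<noteq> N i j}))"
    by (rule card_UN_disjoint) auto
  moreover have "card ((\<lambda>i. (i, j)) ` {i. i < m \<and> M i j \<noteq> N i j}) = card {i. i < m \<and> M i j \<noteq> N i j}" for j
    by (rule card_image) (auto simp: inj_on_def)
  ultimately show ?thesis unfolding hdist_def by simp
qed

lemma hdist_puncture:
  assumes "n = k * l" "\<forall>j<n. r j < m"
  shows "hdist m n M N = hdist ((m - 1) * l) k (puncture m l k r M) (puncture m l k r N) +
    (\<Sum>g<k. card {t. t < l \<and> M (r (g * l + t)) (g * l + t) \<noteq> N (r (g * l + t)) (g * l + t)})"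
proof -
  define F where "F j = card {s. s < m - 1 \<and> M (skip (r j) s) j \<noteq> N (skip (r j) s) j}" for j
  define G :: "nat \<Rightarrow> nat" where "G j = of_bool (M (r j) j \<noteq> N (r j) j)" for j
  have "hdist m n M N = (\<Sum>j<n. F j + G j)"
    unfolding hdist_eq_sum_columns F_def G_def using assms(2) by (intro sum.cong refl card_skip) auto
  also have "\<dots> = (\<Sum>g<k. \<Sum>t<l. F (g * l + t)) + (\<Sum>g<k. \<Sum>t<l. G (g * l + t))"
    unfolding assms(1) sum.lessThan_mult_blocks by (simp add: sum.distrib)
  also have "(\<Sum>g<k. \<Sum>t<l. F (g * l + t)) =
      hdist ((m - 1) * l) k (puncture m l k r M) (puncture m l k r N)"
    unfolding hdist_eq_sum_columns F_def by (intro sum.cong refl card_puncture_column[symmetric]) simp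
  finally show ?thesis by (simp add: G_def card_lessThan_eq_sum_of_bool)
qed

lemma puncture_in_cw_space:
  assumes "n = k * l" "\<forall>j<n. r j < m" "M \<in> cw_space m n w"
    and "\<forall>g<k. card {t. t < l \<and> M (r (g * l + t)) (g * l + t)} = v"
  shows "puncture m l k r M \<in> cw_space ((m - 1) * l) k (l * w - v)"
proof -
  have "card {i. i < (m - 1) * l \<and> puncture m l k r M i g} = l * w - v" if "g < k" for g
  proof -
    define c where "c t = card {s. s < m - 1 \<and> M (skip (r (g * l + t)) s) (g * l + t)}" for t
    have "c t + of_bool (M (r (g * l + t)) (g * l + t)) = w" if "t < l" for t
    proof -
      have j: "g * l + t < n" using mult_add_less_mult[OF \<open>g < k\<close> that] assms(1) by simp
      then have "card {i. i < m \<and> M i (g * l + t)} = w" using assms(3) unfolding cw_space_def by auto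
      then show ?thesis unfolding c_def using card_skip[of "r (g * l + t)" m] assms(2) j by simp
    qed
    then have "(\<Sum>t<l. c t + of_bool (M (r (g * l + t)) (g * l + t))) = l * w"
      by simp
    then have "(\<Sum>t<l. c t) + (\<Sum>t<l. of_bool (M (r (g * l + t)) (g * l + t))) = l * w"
      by (simp only: sum.distrib)
    moreover have "(\<Sum>t<l. of_bool (M (r (g * l + t)) (g * l + t))) = v"
      using assms(4) that by (simp add: card_lessThan_eq_sum_of_bool)
    moreover have "card {i. i < (m - 1) * l \<and> puncture m l k r M i g} = (\<Sum>t<l. c t)"
      unfolding c_def using card_puncture_column[OF that, where P = "\<lambda>x y. x" and N = M] by simp
    ultimately show ?thesis by simp
  qed
  then show ?thesis unfolding cw_space_def by (simp add: puncture_def)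
qed

lemma finite_cw_space: "finite (cw_space m n w)"
proof (rule finite_subset)
  show "cw_space m n w \<subseteq> (\<lambda>S i j. (i, j) \<in> S) ` Pow ({..<m} \<times> {..<n})"
  proof
    fix M assume "M \<in> cw_space m n w"
    then have "{(i, j). M i j} \<subseteq> {..<m} \<times> {..<n}" unfolding cw_space_def by auto
    then show "M \<in> (\<lambda>S i j. (i, j) \<in> S) ` Pow ({..<m} \<times> {..<n})"
      by (intro image_eqI[where x = "{(i, j). M i j}"]) auto
  qed
qed simp

lemma finite_code_sizes: "finite {card C | C. C \<subseteq> cw_space m n w \<and> Q C}"
  by (rule finite_subset[of _ "card ` Pow (cw_space m n w)"]) (auto simp: finite_cw_space)

lemma card_le_A:
  assumes "C \<subseteq> cw_space m n w" "C \<noteq> {}"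
    and "\<forall>x\<in>C. \<forall>y\<in>C. x \<noteq> y \<longrightarrow> int (hdist m n x y) \<ge> 2 * d"
  shows "card C \<le> A m n w d"
  unfolding A_def using assms by (intro Max_ge[OF finite_code_sizes]) blast

lemma A_attained:
  assumes "w \<le> m"
  obtains C where "C \<subseteq> cw_space m n w" "C \<noteq> {}"
    "\<forall>x\<in>C. \<forall>y\<in>C. x \<noteq> y \<longrightarrow> int (hdist m n x y) \<ge> 2 * d" "card C = A m n w d"
proof -
  let ?sizes = "{card C | C. C \<subseteq> cw_space m n w \<and> C \<noteq> {} \<and>
      (\<forall>x\<in>C. \<forall>y\<in>C. x \<noteq> y \<longrightarrow> int (hdist m n x y) \<ge> 2 * d)}"
  have "{i. i < m \<and> i < w} = {..<w}" using assms by auto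
  then have "(\<lambda>i j. i < w \<and> j < n) \<in> cw_space m n w"
    using assms unfolding cw_space_def by auto
  then have "card {\<lambda>i j. i < w \<and> j < n} \<in> ?sizes" by blast
  then have "?sizes \<noteq> {}" by blast
  then have "A m n w d \<in> ?sizes" unfolding A_def by (rule Max_in[OF finite_code_sizes])
  then obtain C where "card C = A m n w d" "C \<subseteq> cw_space m n w" "C \<noteq> {}"
      "\<forall>x\<in>C. \<forall>y\<in>C. x \<noteq> y \<longrightarrow> int (hdist m n x y) \<ge> 2 * d"
    unfolding mem_Collect_eq by (elim exE conjE) simp
  then show ?thesis by (intro that)
qed

lemma sum_card_agreeing_codewords:
  assumes "C \<subseteq> cw_space m n w"
  shows "(\<Sum>r\<in>PiE {..<n} (\<lambda>_. {..<m}). card {M\<in>C. \<forall>j<n. M (r j) j = b j}) =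
    card C * (\<Prod>j<n. if b j then w else m - w)"
proof -
  let ?R = "PiE {..<n} (\<lambda>_. {..<m})"
  have per_word: "card {r \<in> ?R. \<forall>j<n. M (r j) j = b j} = (\<Prod>j<n. if b j then w else m - w)"
    if "M \<in> C" for M
  proof -
    have col: "card {i. i < m \<and> M i j} = w" if "j < n" for j
      using assms \<open>M \<in> C\<close> that unfolding cw_space_def by auto
    have "{r \<in> ?R. \<forall>j<n. M (r j) j = b j} = PiE {..<n} (\<lambda>j. {i. i < m \<and> M i j = b j})"
      by (auto simp: PiE_def Pi_def)
    moreover have "card {i. i < m \<and> M i j = b j} = (if b j then w else m - w)" if "j < n" for j
    proof (cases "b j")
      case False
      then have "{i. i < m \<and> M i j = b j} = {..<m} - {i. i < m \<and> M i j}" by auto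
      moreover have "card ({..<m} - {i. i < m \<and> M i j}) = m - w"
        using col[OF that] by (subst card_Diff_subset) auto
      ultimately show ?thesis using False by simp
    qed (use col[OF that] in simp)
    ultimately show ?thesis by (simp add: card_PiE)
  qed
  have fin: "finite C" "finite ?R"
    using finite_subset[OF assms finite_cw_space] by (simp_all add: finite_PiE)
  have "(\<Sum>r\<in>?R. card {M\<in>C. \<forall>j<n. M (r j) j = b j}) =
      (\<Sum>r\<in>?R. \<Sum>M\<in>C. of_bool (\<forall>j<n. M (r j) j = b j))"
    by (simp only: card_filter_eq_sum_of_bool[OF fin(1)])
  also have "\<dots> = (\<Sum>M\<in>C. \<Sum>r\<in>?R. of_bool (\<forall>j<n. M (r j) j = b j))"
    by (rule sum.swap)
  also have "\<dots> = (\<Sum>M\<in>C. \<Prod>j<n. if b j then w else m - w)"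
    using per_word by (intro sum.cong refl) (simp only: card_filter_eq_sum_of_bool[OF fin(2), symmetric])
  finally show ?thesis by (simp only: sum_constant of_nat_id)
qed

lemma inj_on_puncture:
  assumes "n = k * l" "\<forall>j<n. r j < m"
  shows "inj_on (puncture m l k r) (cw_space m n w)"
proof (rule inj_onI, intro ext)
  fix M N i j
  assume M: "M \<in> cw_space m n w" and N: "N \<in> cw_space m n w"
    and eq: "puncture m l k r M = puncture m l k r N"
  show "M i j = N i j"
  proof (cases "i < m \<and> j < n")
    case False
    then show ?thesis using M N unfolding cw_space_def by blast
  next
    case True
    then have "0 < l" using assms(1) by (cases l) auto
    define g t where "g = j div l" and "t = j mod l"
    have j: "j = g * l + t" "t < l" "g < k"
      using True assms(1) \<open>0 < l\<close> by (auto simp: g_def t_def less_mult_imp_div_less)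
    have r: "r j < m" using True assms(2) by simp
    have rest: "M (skip (r j) s) j = N (skip (r j) s) j" if "s < m - 1" for s
      using puncture_apply[OF that j(2,3), of r M] puncture_apply[OF that j(2,3), of r N] eq j(1)
      by simp
    \<comment> \<open>The deleted entry is recovered from the weight of its column.\<close>
    have "card {i. i < m \<and> M i j} = card {i. i < m \<and> N i j}"
      using M N True unfolding cw_space_def by simp
    moreover have "{s. s < m - 1 \<and> M (skip (r j) s) j} = {s. s < m - 1 \<and> N (skip (r j) s) j}"
      using rest by auto
    ultimately have "of_bool (M (r j) j) = (of_bool (N (r j) j) :: nat)"
      using card_skip[OF r, of "\<lambda>i. M i j"] card_skip[OF r, of "\<lambda>i. N i j"] by simp
    then have deleted: "M (r j) j = N (r j) j" by (cases "M (r j) j"; cases "N (r j) j") simp_all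
    show ?thesis
    proof (cases "i = r j")
      case False
      then have "i \<in> skip (r j) ` {..<m - 1}"
        using True bij_betw_imp_surj_on[OF bij_betw_skip[OF r]] by auto
      then show ?thesis using rest by auto
    qed (use deleted in simp)
  qed
qed

locale punctured_code =
  fixes m n w k l v :: nat and d :: int and C :: "(nat \<Rightarrow> nat \<Rightarrow> bool) set"
  assumes n_eq: "n = k * l"
    and code_subset: "C \<subseteq> cw_space m n w"
    and code_dist: "\<forall>x\<in>C. \<forall>y\<in>C. x \<noteq> y \<longrightarrow> int (hdist m n x y) \<ge> 2 * d"
begin

definition row_choices :: "(nat \<Rightarrow> nat) set" where
  "row_choices = PiE {..<n} (\<lambda>_. {..<m})"

definition patterns :: "(nat \<Rightarrow> nat set) set" where
  "patterns = PiE {..<k} (\<lambda>_. {X. X \<subseteq> {..<l} \<and> card X = v})"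

definition subcode :: "(nat \<Rightarrow> nat) \<Rightarrow> (nat \<Rightarrow> nat set) \<Rightarrow> (nat \<Rightarrow> nat \<Rightarrow> bool) set" where
  "subcode r S = {M \<in> C. \<forall>j<n. M (r j) j = (j mod l \<in> S (j div l))}"

lemma row_choices_less: "r \<in> row_choices \<Longrightarrow> \<forall>j<n. r j < m"
  unfolding row_choices_def by (auto dest: PiE_mem)

lemma patterns_block: "S \<in> patterns \<Longrightarrow> g < k \<Longrightarrow> S g \<subseteq> {..<l} \<and> card (S g) = v"
  unfolding patterns_def by (auto dest: PiE_mem)

lemma finite_patterns: "finite patterns"
  unfolding patterns_def by (rule finite_PiE) (auto intro: finite_subset[of _ "Pow {..<l}"])

lemma finite_subcode: "finite (subcode r S)"
  unfolding subcode_def using finite_subset[OF code_subset finite_cw_space] by simp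

lemma subcode_entry:
  assumes "M \<in> subcode r S" "g < k" "t < l"
  shows "M (r (g * l + t)) (g * l + t) = (t \<in> S g)"
proof -
  have "g * l + t < n" using mult_add_less_mult[OF assms(2,3)] n_eq by simp
  then have "M (r (g * l + t)) (g * l + t) = ((g * l + t) mod l \<in> S ((g * l + t) div l))"
    using assms(1) unfolding subcode_def by blast
  then show ?thesis using assms(3) by simp
qed

lemma subcode_block:
  assumes "S \<in> patterns" "M \<in> subcode r S" "g < k"
  shows "{t. t < l \<and> M (r (g * l + t)) (g * l + t)} = S g"
  using patterns_block[OF assms(1,3)] subcode_entry[OF assms(2,3)] by auto

lemma subcodes_disjoint:
  assumes "S \<in> patterns" "S' \<in> patterns" "S \<noteq> S'"
  shows "subcode r S \<inter> subcode r S' = {}"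
proof (rule ccontr)
  assume "subcode r S \<inter> subcode r S' \<noteq> {}"
  then obtain M where M: "M \<in> subcode r S" "M \<in> subcode r S'" by blast
  have "S g = S' g" if "g \<in> {..<k}" for g
    using subcode_block[OF assms(1) M(1)] subcode_block[OF assms(2) M(2)] that by simp
  then have "S = S'" using assms(1,2) unfolding patterns_def by (rule PiE_ext[rotated 2])
  then show False using assms(3) by simp
qed

lemma sum_card_subcode:
  assumes "S \<in> patterns"
  shows "(\<Sum>r\<in>row_choices. card (subcode r S)) = card C * (w ^ v * (m - w) ^ (l - v)) ^ k"
proof -
  have "(\<Sum>r\<in>row_choices. card (subcode r S)) =
      card C * (\<Prod>j<k * l. if j mod l \<in> S (j div l) then w else m - w)"
    unfolding row_choices_def subcode_def n_eq[symmetric] by (rule sum_card_agreeing_codewords[OF code_subset])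
  also have "\<dots> = card C * (w ^ v * (m - w) ^ (l - v)) ^ k"
    using patterns_block[OF assms] by (simp add: prod_block_pattern)
  finally show ?thesis .
qed

lemma hdist_puncture_subcode_ge:
  assumes "r \<in> row_choices" "M \<in> subcode r S" "N \<in> subcode r S'" "M \<noteq> N"
    and "\<forall>g<k. card {t. t < l \<and> (t \<in> S g) \<noteq> (t \<in> S' g)} \<le> 2 * \<delta>"
  shows "int (hdist ((m - 1) * l) k (puncture m l k r M) (puncture m l k r N)) \<ge> 2 * (d - int k * int \<delta>)"
proof -
  have "(\<Sum>g<k. card {t. t < l \<and> M (r (g * l + t)) (g * l + t) \<noteq> N (r (g * l + t)) (g * l + t)}) =
      (\<Sum>g<k. card {t. t < l \<and> (t \<in> S g) \<noteq> (t \<in> S' g)})"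
    using subcode_entry[OF assms(2)] subcode_entry[OF assms(3)]
    by (intro sum.cong refl arg_cong[where f = card]) auto
  also have "\<dots> \<le> (\<Sum>g<k. 2 * \<delta>)"
    using assms(5) by (intro sum_mono) simp
  finally have "hdist m n M N \<le> hdist ((m - 1) * l) k (puncture m l k r M) (puncture m l k r N) + k * (2 * \<delta>)"
    using hdist_puncture[OF n_eq row_choices_less[OF assms(1)], of M N] by simp
  then have "int (hdist m n M N) \<le>
      int (hdist ((m - 1) * l) k (puncture m l k r M) (puncture m l k r N) + k * (2 * \<delta>))"
    by (simp only: of_nat_le_iff)
  moreover have "int (hdist m n M N) \<ge> 2 * d"
    using code_dist assms(2-4) unfolding subcode_def by blast
  ultimately show ?thesis by simp
qed

lemma card_UN_subcode_le:
  assumes "r \<in> row_choices" "SS \<subseteq> patterns"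
    and "\<forall>S\<in>SS. \<forall>S'\<in>SS. \<forall>g<k. card {t. t < l \<and> (t \<in> S g) \<noteq> (t \<in> S' g)} \<le> 2 * \<delta>"
  shows "card (\<Union>S\<in>SS. subcode r S) \<le> A ((m - 1) * l) k (l * w - v) (d - int k * int \<delta>)"
proof (cases "(\<Union>S\<in>SS. subcode r S) = {}")
  case False
  define U where "U = (\<Union>S\<in>SS. subcode r S)"
  have r: "\<forall>j<n. r j < m" using row_choices_less[OF assms(1)] .
  have U_code: "U \<subseteq> cw_space m n w" using code_subset unfolding U_def subcode_def by blast
  then have inj: "inj_on (puncture m l k r) U"
    using inj_on_puncture[OF n_eq r] by (rule inj_on_subset[rotated])
  have "puncture m l k r ` U \<subseteq> cw_space ((m - 1) * l) k (l * w - v)"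
  proof
    fix x assume "x \<in> puncture m l k r ` U"
    then obtain M S where x: "x = puncture m l k r M" and S: "S \<in> SS" "M \<in> subcode r S"
      unfolding U_def by blast
    then have "M \<in> cw_space m n w" using U_code unfolding U_def by blast
    moreover have "\<forall>g<k. card {t. t < l \<and> M (r (g * l + t)) (g * l + t)} = v"
      using subcode_block[OF _ S(2)] patterns_block S(1) assms(2) by (simp add: subset_iff)
    ultimately show "x \<in> cw_space ((m - 1) * l) k (l * w - v)"
      unfolding x by (rule puncture_in_cw_space[OF n_eq r])
  qed
  moreover have "puncture m l k r ` U \<noteq> {}" using False unfolding U_def by simp
  moreover have "\<forall>x\<in>puncture m l k r ` U. \<forall>y\<in>puncture m l k r ` U. x \<noteq> y \<longrightarrow>
      int (hdist ((m - 1) * l) k x y) \<ge> 2 * (d - int k * int \<delta>)"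
  proof (intro ballI impI)
    fix x y assume "x \<in> puncture m l k r ` U" "y \<in> puncture m l k r ` U" "x \<noteq> y"
    then obtain M N S S' where MN: "x = puncture m l k r M" "y = puncture m l k r N"
      "S \<in> SS" "S' \<in> SS" "M \<in> subcode r S" "N \<in> subcode r S'"
      unfolding U_def by blast
    moreover have "M \<noteq> N" using MN(1,2) \<open>x \<noteq> y\<close> by blast
    ultimately show "int (hdist ((m - 1) * l) k x y) \<ge> 2 * (d - int k * int \<delta>)"
      using hdist_puncture_subcode_ge[OF assms(1)] assms(3) by blast
  qed
  ultimately have "card (puncture m l k r ` U) \<le> A ((m - 1) * l) k (l * w - v) (d - int k * int \<delta>)"
    by (rule card_le_A)
  then show ?thesis using card_image[OF inj] unfolding U_def by simp
qed simp

lemma card_mult_patterns_le: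
  assumes "SS \<subseteq> patterns"
    and "\<forall>S\<in>SS. \<forall>S'\<in>SS. \<forall>g<k. card {t. t < l \<and> (t \<in> S g) \<noteq> (t \<in> S' g)} \<le> 2 * \<delta>"
  shows "card C * card SS * (w ^ v * (m - w) ^ (l - v)) ^ k \<le>
    m ^ n * A ((m - 1) * l) k (l * w - v) (d - int k * int \<delta>)"
proof -
  have fin: "finite row_choices" "finite SS"
    using finite_subset[OF assms(1) finite_patterns] by (simp_all add: row_choices_def finite_PiE)
  have "card C * card SS * (w ^ v * (m - w) ^ (l - v)) ^ k = (\<Sum>S\<in>SS. card C * (w ^ v * (m - w) ^ (l - v)) ^ k)"
    by simp
  also have "\<dots> = (\<Sum>S\<in>SS. \<Sum>r\<in>row_choices. card (subcode r S))"
    using assms(1) by (intro sum.cong refl sum_card_subcode[symmetric]) blast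
  also have "\<dots> = (\<Sum>r\<in>row_choices. \<Sum>S\<in>SS. card (subcode r S))"
    by (rule sum.swap)
  also have "\<dots> = (\<Sum>r\<in>row_choices. card (\<Union>S\<in>SS. subcode r S))"
  proof (rule sum.cong[OF refl])
    fix r
    have "\<forall>S\<in>SS. finite (subcode r S)" using finite_subcode by blast
    moreover have "\<forall>S\<in>SS. \<forall>S'\<in>SS. S \<noteq> S' \<longrightarrow> subcode r S \<inter> subcode r S' = {}"
    proof (intro ballI impI)
      fix S S' assume "S \<in> SS" "S' \<in> SS" "S \<noteq> S'"
      then show "subcode r S \<inter> subcode r S' = {}"
        using assms(1) by (intro subcodes_disjoint) auto
    qed
    ultimately show "(\<Sum>S\<in>SS. card (subcode r S)) = card (\<Union>S\<in>SS. subcode r S)"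
      by (rule card_UN_disjoint[OF fin(2), symmetric])
  qed
  also have "\<dots> \<le> (\<Sum>r\<in>row_choices. A ((m - 1) * l) k (l * w - v) (d - int k * int \<delta>))"
    by (intro sum_mono card_UN_subcode_le[OF _ assms])
  also have "\<dots> = m ^ n * A ((m - 1) * l) k (l * w - v) (d - int k * int \<delta>)"
    by (simp add: row_choices_def card_PiE)
  finally show ?thesis .
qed

end

lemma A_mult_le:
  assumes "w \<le> m" "n = k * l" "v \<le> l"
  shows "A m n w d * (w ^ v * (m - w) ^ (l - v)) ^ k \<le> m ^ n * A ((m - 1) * l) k (l * w - v) d"
proof -
  obtain C where C: "C \<subseteq> cw_space m n w" "C \<noteq> {}"
    "\<forall>x\<in>C. \<forall>y\<in>C. x \<noteq> y \<longrightarrow> int (hdist m n x y) \<ge> 2 * d" "card C = A m n w d"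
    using A_attained[OF assms(1)] .
  interpret punctured_code m n w k l v d C
    using assms(2) C(1,3) by unfold_locales
  have "restrict (\<lambda>_. {..<v}) {..<k} \<in> patterns"
    using assms(3) unfolding patterns_def by auto
  then show ?thesis
    using card_mult_patterns_le[of "{restrict (\<lambda>_. {..<v}) {..<k}}" 0] C(4) by simp
qed

lemma A_mult_choose_le:
  assumes "w \<le> m" "n = k * l"
  shows "A m n w d * (l choose v) ^ k * (w ^ v * (m - w) ^ (l - v)) ^ k \<le>
    m ^ n * A ((m - 1) * l) k (l * w - v) (d - int k * int (min v (l - v)))"
proof -
  obtain C where C: "C \<subseteq> cw_space m n w" "C \<noteq> {}"
    "\<forall>x\<in>C. \<forall>y\<in>C. x \<noteq> y \<longrightarrow> int (hdist m n x y) \<ge> 2 * d" "card C = A m n w d"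
    using A_attained[OF assms(1)] .
  interpret punctured_code m n w k l v d C
    using assms(2) C(1,3) by unfold_locales
  have "card patterns = (l choose v) ^ k"
    by (simp add: patterns_def card_PiE n_subsets)
  moreover have "\<forall>S\<in>patterns. \<forall>S'\<in>patterns. \<forall>g<k.
      card {t. t < l \<and> (t \<in> S g) \<noteq> (t \<in> S' g)} \<le> 2 * min v (l - v)"
    using patterns_block by (blast intro: card_sym_diff_le)
  ultimately show ?thesis
    using card_mult_patterns_le[of patterns "min v (l - v)"] C(4) by simp
qed

lemma A_le_powr:
  assumes "0 < w" "w < m" "0 < l" "l dvd n" "v \<le> l"
  shows "real (A m n w d) \<le>
    (real m / real w) powr (real n * real v / real l) *
    (real m / (real m - real w)) powr (real n - real n * real v / real l) *
    real (A ((m - 1) * l) (n div l) (l * w - v) d)"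
proof -
  define k where "k = n div l"
  have n: "n = k * l" using assms(4) unfolding k_def by simp
  define x y where "x = real w" and "y = real m - real w"
  have pos: "0 < x" "0 < y" using assms(1,2) unfolding x_def y_def by simp_all
  define Q where "Q = (x ^ v * y ^ (l - v)) ^ k"
  have "real n * real v / real l = real (k * v)" using n assms(3) by simp
  moreover have "real n - real n * real v / real l = real (k * (l - v))"
    using n assms(3,5) by (simp add: of_nat_diff diff_mult_distrib2)
  ultimately have "(real m / x) powr (real n * real v / real l) * (real m / y) powr (real n - real n * real v / real l) =
      (real m / x) ^ (k * v) * (real m / y) ^ (k * (l - v))"
    using pos assms(2) by (simp only:) (simp add: powr_realpow del: of_nat_mult)
  also have "\<dots> = real m ^ n / Q"
    using assms(5) unfolding n Q_def
    by (simp add: power_divide power_mult_distrib power_mult[symmetric] power_add[symmetric]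
        mult.commute add_mult_distrib2[symmetric])
  finally have factor: "(real m / x) powr (real n * real v / real l) *
      (real m / y) powr (real n - real n * real v / real l) = real m ^ n / Q" .
  have "real (A m n w d) * Q \<le> real m ^ n * real (A ((m - 1) * l) k (l * w - v) d)"
    using A_mult_le[OF less_imp_le[OF assms(2)] n assms(5), of d] assms(2)
    unfolding Q_def x_def y_def by (simp flip: of_nat_diff of_nat_power of_nat_mult)
  moreover have "0 < Q" using pos unfolding Q_def by simp
  ultimately have "real (A m n w d) \<le> real m ^ n / Q * real (A ((m - 1) * l) k (l * w - v) d)"
    by (simp add: pos_le_divide_eq)
  then show ?thesis unfolding k_def factor[unfolded x_def y_def] .
qed

lemma A_le_choose:
  assumes "0 < w" "w < m" "l dvd n" "v \<le> l"
  shows "real (A m n w d) \<le>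
    (real m ^ l / (real (l choose v) * real w ^ v * (real m - real w) ^ (l - v))) ^ (n div l) *
    real (A ((m - 1) * l) (n div l) (l * w - v) (d - int (n div l) * int (min v (l - v))))"
proof -
  define k where "k = n div l"
  have n: "n = k * l" using assms(3) unfolding k_def by simp
  define B where "B = real (l choose v) * real w ^ v * (real m - real w) ^ (l - v)"
  have "0 < B" using assms unfolding B_def by simp
  have "real (A m n w d) * B ^ k \<le>
      real m ^ n * real (A ((m - 1) * l) k (l * w - v) (d - int k * int (min v (l - v))))"
    using A_mult_choose_le[OF less_imp_le[OF assms(2)] n, of d v] assms(2)
    unfolding B_def by (simp flip: of_nat_diff of_nat_power of_nat_mult add: power_mult_distrib mult.assoc)
  then have "real (A m n w d) \<le>
      real m ^ n / B ^ k * real (A ((m - 1) * l) k (l * w - v) (d - int k * int (min v (l - v))))"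
    using \<open>0 < B\<close> by (simp add: pos_le_divide_eq)
  moreover have "(real m ^ l / B) ^ k = real m ^ n / B ^ k"
    unfolding n by (simp add: power_divide power_mult[symmetric] mult.commute)
  ultimately show ?thesis unfolding B_def[symmetric] k_def[symmetric] by (simp only:)
qed

theorem corollary1:
  fixes m n w l v :: nat and d :: int
  assumes "m > 0" "n > 0" "d > 0" "1 \<le> w" "w \<le> m - 1"
    and "l > 0" "l dvd n" "v \<le> l"
  shows "(real (A m n w d) \<le>
           (real m / real w) powr (real n * real v / real l) *
           (real m / (real m - real w)) powr (real n - real n * real v / real l) *
           real (A ((m - 1) * l) (n div l) (l * w - v) d)) \<and>
         (real (A m n w d) \<le>
           (real m ^ l / (real (l choose v) * real w ^ v * (real m - real w) ^ (l - v))) ^ (n div l) *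
           real (A ((m - 1) * l) (n div l) (l * w - v) (d - int (n div l) * int (min v (l - v)))))"
proof -
  have "0 < w" "w < m" using assms(4,5) by linarith+
  then show ?thesis
    using A_le_powr[OF _ _ assms(6-8)] A_le_choose[OF _ _ assms(7,8)] by (intro conjI)
qed

end
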